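(* Let $(G,Y)$ be a finite $C$-group with $Y=C_1\sqcup\dots\sqcup C_m$, and let $Y'=C_1\sqcup\dots\sqcup C_k$ be ample. Let $d=d_{Y'}$. If $s\in S(G,Y)^G$ satisfies $\tau_i(s)\ge 2n_ip_id+1$ for all $i\le k$, then $s$ can be written in the form $s=(x_{y_{k+1,1}}^{a_{k+1}}\cdots x_{y_{m,1}}^{a_m})\cdot s_{Y'}^d\cdot s_1$, where $a_i=\tau_i(s)$ for $i=k+1,\dots,m$ and $s_1\in S(G,Y)$ satisfies $\tau_i(s_1)=0$ for $i=k+1,\dots,m$.
   Context: A finite $C$-group is a pair $(G,Y)$ with $Y$ a finite conjugation-invariant subset of the group $G$, $1\notin Y$, such that $G$ has a presentation with generators the elements of $Y$ and defining relations all of the form $z^{-1}yz=y'$ ($y,y',z\in Y$). $Y=C_1\sqcup\dots\sqcup C_m$ is the decomposition into conjugacy classes of $G$, enumerated $C_i=\{y_{i,1},\dots,y_{i,n_i}\}$; $p_i$ is the least $p\ge1$ with $y^p$ central for $y\in C_i$. The factorization semigroup $S(G,Y)$ is generated by symbols $x_y$, $y\in Y$, subject to $x_{g_1}x_{g_2}=x_{g_2}x_{g_2^{-1}g_1g_2}=x_{g_1g_2g_1^{-1}}x_{g_1}$; $\alpha_G(x_y)=y$. For $s=x_{g_1}\cdots x_{g_n}$, $G_s$ is the subgroup generated by the $g_j$, $S(G,Y)^G=\{s:G_s=G\}$, $\tau_i(s)$ = number of factors of $s$ from $\{x_y:y\in C_i\}$. $Y'=C_1\sqcup\dots\sqcup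 C_k$ is ample if any two elements of $Y$ conjugate in $G$ are conjugate by an element of the subgroup generated by $Y'$. For conjugate $y,y'\in Y$, $d_{Y'}(y,y')$ is the least $r\ge0$ such that $y'=(z_1\cdots z_r)^{-1}y(z_1\cdots z_r)$ for some $z_1,\dots,z_r\in Y'$; $d_{Y'}$ is the maximum of $d_{Y'}(y,y')$ over all pairs of conjugate elements $y,y'\in Y$. $s_{Y'}=\prod_{i=1}^k\prod_{j=1}^{n_i}x_{y_{i,j}}^{p_i}$. *)

theory Defs
  imports "HOL-Algebra.Group" "HOL-Algebra.Generated_Groups"
begin

definition lprod :: "('a, 'b) monoid_scheme \<Rightarrow> 'a list \<Rightarrow> 'a" where
  "lprod G zs = foldr (\<lambda>x acc. x \<otimes>\<^bsub>G\<^esub> acc) zs \<one>\<^bsub>G\<^esub>"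

definition word_eval :: "('a, 'b) monoid_scheme \<Rightarrow> ('a \<times> bool) list \<Rightarrow> 'a" where
  "word_eval G w = lprod G (map (\<lambda>(y, b). if b then y else inv\<^bsub>G\<^esub> y) w)"

(* The congruence on words in Y^{\pm 1} defining the group presented by generators Y and
   all defining relations  z^{-1} y z = y'  (y, y', z in Y) valid in G:
   equality in the free group modulo the normal closure of these relators. *)
inductive pres_eq :: "('a, 'b) monoid_scheme \<Rightarrow> 'a set \<Rightarrow> ('a \<times> bool) list \<Rightarrow> ('a \<times> bool) list \<Rightarrow> bool"
  for G Y where
  pres_refl: "pres_eq G Y w w"
| pres_sym: "pres_eq G Y u w \<Longrightarrow> pres_eq G Y w u"
| pres_trans: "pres_eq G Y u v \<Longrightarrow> pres_eq G Y v w \<Longrightarrow> pres_eq G Y u w"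
| pres_cancel: "y \<in> Y \<Longrightarrow> pres_eq G Y (u @ [(y, b), (y, \<not> b)] @ v) (u @ v)"
| pres_rel: "y \<in> Y \<Longrightarrow> z \<in> Y \<Longrightarrow> y' \<in> Y \<Longrightarrow> y' = inv\<^bsub>G\<^esub> z \<otimes>\<^bsub>G\<^esub> y \<otimes>\<^bsub>G\<^esub> z \<Longrightarrow>
     pres_eq G Y (u @ [(z, False), (y, True), (z, True)] @ v) (u @ [(y', True)] @ v)"

definition finite_C_group :: "('a, 'b) monoid_scheme \<Rightarrow> 'a set \<Rightarrow> bool" where
  "finite_C_group G Y \<longleftrightarrow> group G \<and> Y \<subseteq> carrier G \<and> finite Y \<and> \<one>\<^bsub>G\<^esub> \<notin> Y
     \<and> (\<forall>y\<in>Y. \<forall>g\<in>carrier G. inv\<^bsub>G\<^esub> g \<otimes>\<^bsub>G\<^esub> y \<otimes>\<^bsub>G\<^esub> g \<in> Y)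
     \<and> generate G Y = carrier G
     \<and> (\<forall>w. set (map fst w) \<subseteq> Y \<longrightarrow> word_eval G w = \<one>\<^bsub>G\<^esub> \<longrightarrow> pres_eq G Y w [])"

definition conjugate_in :: "('a, 'b) monoid_scheme \<Rightarrow> 'a \<Rightarrow> 'a \<Rightarrow> bool" where
  "conjugate_in G y y' \<longleftrightarrow> (\<exists>g\<in>carrier G. y' = inv\<^bsub>G\<^esub> g \<otimes>\<^bsub>G\<^esub> y \<otimes>\<^bsub>G\<^esub> g)"

definition conj_class :: "('a, 'b) monoid_scheme \<Rightarrow> 'a \<Rightarrow> 'a set" where
  "conj_class G y = {inv\<^bsub>G\<^esub> g \<otimes>\<^bsub>G\<^esub> y \<otimes>\<^bsub>G\<^esub> g | g. g \<in> carrier G}"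

definition central :: "('a, 'b) monoid_scheme \<Rightarrow> 'a \<Rightarrow> bool" where
  "central G x \<longleftrightarrow> (\<forall>g\<in>carrier G. x \<otimes>\<^bsub>G\<^esub> g = g \<otimes>\<^bsub>G\<^esub> x)"

definition cls_p :: "('a, 'b) monoid_scheme \<Rightarrow> 'a set \<Rightarrow> nat" where
  "cls_p G C = (LEAST p. p \<ge> 1 \<and> (\<forall>y\<in>C. central G (y [^]\<^bsub>G\<^esub> p)))"

definition ample :: "('a, 'b) monoid_scheme \<Rightarrow> 'a set \<Rightarrow> 'a set \<Rightarrow> bool" where
  "ample G Y Y' \<longleftrightarrow> (\<forall>y\<in>Y. \<forall>y'\<in>Y. conjugate_in G y y' \<longrightarrow>
      (\<exists>g\<in>generate G Y'. y' = inv\<^bsub>G\<^esub> g \<otimes>\<^bsub>G\<^esub> y \<otimes>\<^bsub>G\<^esub> g))"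

definition dist_Y :: "('a, 'b) monoid_scheme \<Rightarrow> 'a set \<Rightarrow> 'a \<Rightarrow> 'a \<Rightarrow> nat" where
  "dist_Y G Y' y y' = (LEAST r. \<exists>zs. length zs = r \<and> set zs \<subseteq> Y' \<and>
      y' = inv\<^bsub>G\<^esub> (lprod G zs) \<otimes>\<^bsub>G\<^esub> y \<otimes>\<^bsub>G\<^esub> lprod G zs)"

definition d_Y :: "('a, 'b) monoid_scheme \<Rightarrow> 'a set \<Rightarrow> 'a set \<Rightarrow> nat" where
  "d_Y G Y Y' = Max {dist_Y G Y' y y' | y y'. y \<in> Y \<and> y' \<in> Y \<and> conjugate_in G y y'}"

(* Factorization semigroup S(G,Y): words x_{g_1}...x_{g_n} (lists of elements of Y)
   modulo the congruence generated by
   x_{g1} x_{g2} = x_{g2} x_{g2^{-1} g1 g2} = x_{g1 g2 g1^{-1}} x_{g1}. *)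
inductive fact_eq :: "('a, 'b) monoid_scheme \<Rightarrow> 'a set \<Rightarrow> 'a list \<Rightarrow> 'a list \<Rightarrow> bool"
  for G Y where
  fact_refl: "fact_eq G Y w w"
| fact_sym: "fact_eq G Y u w \<Longrightarrow> fact_eq G Y w u"
| fact_trans: "fact_eq G Y u v \<Longrightarrow> fact_eq G Y v w \<Longrightarrow> fact_eq G Y u w"
| fact_rel1: "g1 \<in> Y \<Longrightarrow> g2 \<in> Y \<Longrightarrow>
     fact_eq G Y (u @ [g1, g2] @ v) (u @ [g2, inv\<^bsub>G\<^esub> g2 \<otimes>\<^bsub>G\<^esub> g1 \<otimes>\<^bsub>G\<^esub> g2] @ v)"
| fact_rel2: "g1 \<in> Y \<Longrightarrow> g2 \<in> Y \<Longrightarrow>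
     fact_eq G Y (u @ [g1, g2] @ v) (u @ [g1 \<otimes>\<^bsub>G\<^esub> g2 \<otimes>\<^bsub>G\<^esub> inv\<^bsub>G\<^esub> g1, g1] @ v)"

definition tau :: "'a set \<Rightarrow> 'a list \<Rightarrow> nat" where
  "tau C s = length (filter (\<lambda>g. g \<in> C) s)"

end

theory Submission
  imports Defs
begin

text \<open>
  The moves of the factorization semigroup replace a letter by a conjugate, so they preserve
  the number tau_i of letters in each conjugacy class and the subgroup generated by the
  letters.  If z^p is central, the block x_z^p commutes with every word and can be conjugated
  by any element generated by the remaining letters.  Pigeonhole on the abundant classes
  C_1, ..., C_k therefore lets one pull out, block by block, the d copies of s_Y', whose
  product is central, while the remaining word still generates G and keeps more than
  n_j (p_j - 1) letters of each C_j with j \<le> k.  The letters of C_{k+1}, ..., C_m are then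
  gathered in front class by class, and each is conjugated to y_{i,1} by an element of the
  group generated by Y' (this is where ampleness enters): conjugating a front letter by z in
  C_j uses a block z^(p_j) borrowed, by the same pigeonhole argument, from the reserve
  letters; the block travels on through s_Y'^d and returns to the reserve as p_j letters of
  C_j.  If d = 0, every conjugacy class in Y is a singleton and nothing has to be conjugated.
\<close>

locale conj_closed_gens = group G for G (structure) +
  fixes Y :: "'a set"
  assumes gens_carrier: "Y \<subseteq> carrier G"
    and gens_conj_closed: "\<And>y g. y \<in> Y \<Longrightarrow> g \<in> carrier G \<Longrightarrow> inv g \<otimes> y \<otimes> g \<in> Y"
begin

abbreviation fact_equiv :: "'a list \<Rightarrow> 'a list \<Rightarrow> bool" (infix "\<approx>" 50)
  where "u \<approx> w \<equiv> fact_eq G Y u w"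

abbreviation conjg :: "'a \<Rightarrow> 'a \<Rightarrow> 'a"
  where "conjg g x \<equiv> inv g \<otimes> x \<otimes> g"

lemma gen_in_carrier: "y \<in> Y \<Longrightarrow> y \<in> carrier G"
  using gens_carrier by auto

lemma word_in_carrier: "set w \<subseteq> Y \<Longrightarrow> set w \<subseteq> carrier G"
  using gens_carrier by auto

lemma gens_conj_closed': "y \<in> Y \<Longrightarrow> g \<in> carrier G \<Longrightarrow> g \<otimes> y \<otimes> inv g \<in> Y"
  using gens_conj_closed[of y "inv g"] by simp

lemma mult_inv_cancel_left [simp]: "g \<in> carrier G \<Longrightarrow> x \<in> carrier G \<Longrightarrow> g \<otimes> (inv g \<otimes> x) = x"
  by (simp add: m_assoc[symmetric])

lemma inv_mult_cancel_left [simp]: "g \<in> carrier G \<Longrightarrow> x \<in> carrier G \<Longrightarrow> inv g \<otimes> (g \<otimes> x) = x"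
  by (simp add: m_assoc[symmetric])

lemma conjg_conjg:
  "g \<in> carrier G \<Longrightarrow> h \<in> carrier G \<Longrightarrow> x \<in> carrier G \<Longrightarrow> conjg h (conjg g x) = conjg (g \<otimes> h) x"
  by (simp add: inv_mult_group m_assoc)

lemma conjg_pow:
  "g \<in> carrier G \<Longrightarrow> z \<in> carrier G \<Longrightarrow> conjg g z [^] (q::nat) = conjg g (z [^] q)"
  by (induction q) (auto simp: m_assoc)

section \<open>The factorization congruence\<close>

lemma fact_eq_refl: "u \<approx> u"
  by (rule fact_eq.fact_refl)

lemma fact_eq_sym: "u \<approx> w \<Longrightarrow> w \<approx> u"
  by (rule fact_eq.fact_sym)

lemma fact_eq_trans [trans]: "u \<approx> v \<Longrightarrow> v \<approx> w \<Longrightarrow> u \<approx> w"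
  by (rule fact_eq.fact_trans)

lemma fact_eq_append_cong: "u \<approx> w \<Longrightarrow> a @ u @ b \<approx> a @ w @ b"
proof (induction rule: fact_eq.induct)
  case (fact_rel1 g1 g2 u v)
  then show ?case using fact_eq.fact_rel1[of g1 Y g2 G "a @ u" "v @ b"] by simp
next
  case (fact_rel2 g1 g2 u v)
  then show ?case using fact_eq.fact_rel2[of g1 Y g2 G "a @ u" "v @ b"] by simp
qed (auto intro: fact_eq.intros)

lemma fact_eq_append_right: "u \<approx> w \<Longrightarrow> u @ b \<approx> w @ b"
  using fact_eq_append_cong[of u w "[]" b] by simp

lemma fact_eq_append_left: "u \<approx> w \<Longrightarrow> a @ u \<approx> a @ w"
  using fact_eq_append_cong[of u w a "[]"] by simp

lemma fact_eq_Cons: "u \<approx> w \<Longrightarrow> x # u \<approx> x # w"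
  using fact_eq_append_left[of u w "[x]"] by simp

lemma fact_eq_swap_right: "g1 \<in> Y \<Longrightarrow> g2 \<in> Y \<Longrightarrow> g1 # g2 # b \<approx> g2 # conjg g2 g1 # b"
  using fact_eq.fact_rel1[of g1 Y g2 G "[]" b] by simp

lemma fact_eq_words: "u \<approx> w \<Longrightarrow> set u \<subseteq> Y \<longleftrightarrow> set w \<subseteq> Y"
proof (induction rule: fact_eq.induct)
  case (fact_rel1 g1 g2 u v)
  then show ?case using gens_conj_closed[of g1 g2] gen_in_carrier by auto
next
  case (fact_rel2 g1 g2 u v)
  then show ?case using gens_conj_closed'[of g2 g1] gen_in_carrier by auto
qed auto

lemma lprod_Nil [simp]: "lprod G [] = \<one>"
  by (simp add: lprod_def)

lemma lprod_Cons [simp]: "lprod G (x # xs) = x \<otimes> lprod G xs"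
  by (simp add: lprod_def)

lemma lprod_closed [simp]: "set xs \<subseteq> carrier G \<Longrightarrow> lprod G xs \<in> carrier G"
  by (induction xs) auto

lemma lprod_append:
  "set xs \<subseteq> carrier G \<Longrightarrow> set ys \<subseteq> carrier G \<Longrightarrow> lprod G (xs @ ys) = lprod G xs \<otimes> lprod G ys"
  by (induction xs) (auto simp: m_assoc)

lemma lprod_replicate: "z \<in> carrier G \<Longrightarrow> lprod G (replicate q z) = z [^] q"
  by (induction q) (auto simp add: nat_pow_Suc2[symmetric])

lemma letter_past_word:
  "h \<in> Y \<Longrightarrow> set F \<subseteq> Y \<Longrightarrow> h # F \<approx> F @ [conjg (lprod G F) h]"
proof (induction F arbitrary: h)
  case Nil
  then show ?case by (simp add: gen_in_carrier fact_eq_refl)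
next
  case (Cons f F)
  have f: "f \<in> Y" and F: "set F \<subseteq> Y" using Cons.prems by auto
  have "h # f # F \<approx> f # conjg f h # F"
    using fact_eq_swap_right Cons.prems f by auto
  also have "\<dots> \<approx> f # F @ [conjg (lprod G F) (conjg f h)]"
    using Cons.IH[of "conjg f h"] F gens_conj_closed[of h f] Cons.prems gen_in_carrier f
    by (auto intro: fact_eq_Cons)
  finally show ?case
    using conjg_conjg[of f "lprod G F" h] f Cons.prems gen_in_carrier word_in_carrier[OF F] by simp
qed

lemma word_past_letter: "h \<in> Y \<Longrightarrow> set F \<subseteq> Y \<Longrightarrow> F @ [h] \<approx> h # map (conjg h) F"
proof (induction F)
  case Nil
  then show ?case by (simp add: fact_eq_refl)
next
  case (Cons f F)
  then have "f # F @ [h] \<approx> f # h # map (conjg h) F"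
    by (auto intro: fact_eq_Cons)
  also have "\<dots> \<approx> h # conjg h f # map (conjg h) F"
    using fact_eq_swap_right Cons.prems by auto
  finally show ?case by simp
qed

lemma word_past_word:
  "set U \<subseteq> Y \<Longrightarrow> set V \<subseteq> Y \<Longrightarrow> U @ V \<approx> V @ map (conjg (lprod G V)) U"
proof (induction U)
  case Nil
  then show ?case by (simp add: fact_eq_refl)
next
  case (Cons u U)
  then have "u # U @ V \<approx> u # V @ map (conjg (lprod G V)) U"
    by (auto intro: fact_eq_Cons)
  also have "\<dots> \<approx> (V @ [conjg (lprod G V) u]) @ map (conjg (lprod G V)) U"
    using fact_eq_append_right[OF letter_past_word] Cons.prems by fastforce
  finally show ?case by simp
qed

end

lemma set_replicate_subset [simp]: "x \<in> A \<Longrightarrow> set (replicate n x) \<subseteq> A"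
  by (simp add: set_replicate_conv_if)

lemma tau_Nil [simp]: "tau C [] = 0"
  by (simp add: tau_def)

lemma tau_Cons [simp]: "tau C (x # v) = (if x \<in> C then Suc (tau C v) else tau C v)"
  by (simp add: tau_def)

lemma tau_append [simp]: "tau C (u @ v) = tau C u + tau C v"
  by (simp add: tau_def)

lemma tau_replicate [simp]: "tau C (replicate q z) = (if z \<in> C then q else 0)"
  by (induction q) auto

lemma tau_eq_0_iff: "tau C w = 0 \<longleftrightarrow> (\<forall>x\<in>set w. x \<notin> C)"
  by (simp add: tau_def filter_empty_conv)

lemma tau_eq_length: "set w \<subseteq> C \<Longrightarrow> tau C w = length w"
  by (induction w) auto

lemma tau_eq_sum_count: "finite C \<Longrightarrow> tau C w = (\<Sum>b\<in>C. count_list w b)"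
proof -
  assume "finite C"
  have count_list_filter_in: "count_list (filter (\<lambda>x. x \<in> C) w) b = count_list w b" if "b \<in> C" for b
    using that by (induction w) auto
  from \<open>finite C\<close> have "tau C w = (\<Sum>b\<in>C. count_list (filter (\<lambda>x. x \<in> C) w) b)"
    using sum_count_set[of "filter (\<lambda>x. x \<in> C) w" C] unfolding tau_def by force
  also have "\<dots> = (\<Sum>b\<in>C. count_list w b)"
    by (rule sum.cong) (simp_all add: count_list_filter_in)
  finally show ?thesis .
qed

lemma tau_gt_imp_count_gt:
  assumes "finite C" "tau C w > card C * q"
  shows "\<exists>b\<in>C. count_list w b > q"
proof (rule ccontr)
  assume "\<not> ?thesis"
  then have "(\<Sum>b\<in>C. count_list w b) \<le> card C * q"
    using sum_bounded_above[of C "count_list w" q] by (simp add: not_less mult.commute)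
  then show False using assms tau_eq_sum_count by fastforce
qed

context conj_closed_gens
begin

lemma fact_eq_tau:
  assumes conj_inv: "\<And>x g. x \<in> carrier G \<Longrightarrow> g \<in> carrier G \<Longrightarrow> conjg g x \<in> C \<longleftrightarrow> x \<in> C"
  shows "u \<approx> w \<Longrightarrow> tau C u = tau C w"
proof (induction rule: fact_eq.induct)
  case (fact_rel1 g1 g2 u v)
  then show ?case using conj_inv[of g1 g2] gen_in_carrier by auto
next
  case (fact_rel2 g1 g2 u v)
  then show ?case using conj_inv[of g2 "inv g1"] gen_in_carrier by auto
qed auto

lemma conj_class_conjugate:
  assumes "c \<in> carrier G" "b \<in> conj_class G c" "z \<in> conj_class G c"
  shows "\<exists>g\<in>carrier G. z = conjg g b"
proof -
  obtain g1 where g1: "g1 \<in> carrier G" "b = conjg g1 c"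
    using assms(2) by (auto simp: conj_class_def)
  obtain g2 where g2: "g2 \<in> carrier G" "z = conjg g2 c"
    using assms(3) by (auto simp: conj_class_def)
  have "conjg (inv g1 \<otimes> g2) b = z"
    using g1 g2 assms(1) conjg_conjg[of g1 "inv g1 \<otimes> g2" c] by (simp add: m_assoc[symmetric])
  then show ?thesis using g1 g2 by (metis inv_closed m_closed)
qed

lemma conjg_in_conj_class_iff:
  assumes "c \<in> carrier G" "x \<in> carrier G" "g \<in> carrier G"
  shows "conjg g x \<in> conj_class G c \<longleftrightarrow> x \<in> conj_class G c"
proof
  assume "conjg g x \<in> conj_class G c"
  then obtain h where h: "h \<in> carrier G" "conjg g x = conjg h c"
    by (auto simp: conj_class_def)
  have "x = conjg (inv g) (conjg g x)"
    using assms by (simp add: m_assoc)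
  also have "\<dots> = conjg (h \<otimes> inv g) c"
    using h assms conjg_conjg[of h "inv g" c] by simp
  finally show "x \<in> conj_class G c"
    using h assms by (auto simp: conj_class_def)
next
  assume "x \<in> conj_class G c"
  then obtain h where h: "h \<in> carrier G" "x = conjg h c"
    by (auto simp: conj_class_def)
  then have "conjg g x = conjg (h \<otimes> g) c"
    using conjg_conjg[of h g c] assms by simp
  then show "conjg g x \<in> conj_class G c"
    using h assms by (auto simp: conj_class_def)
qed

lemma fact_eq_tau_conj_class:
  "c \<in> carrier G \<Longrightarrow> u \<approx> w \<Longrightarrow> tau (conj_class G c) u = tau (conj_class G c) w"
  by (rule fact_eq_tau) (simp add: conjg_in_conj_class_iff)

lemma generate_swap_conjg:
  assumes "A \<subseteq> carrier G" "g1 \<in> carrier G" "g2 \<in> carrier G"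
  shows "generate G (A \<union> {g1, g2}) = generate G (A \<union> {g2, conjg g2 g1})"
proof
  let ?H = "generate G (A \<union> {g2, conjg g2 g1})"
  have "g2 \<otimes> conjg g2 g1 \<otimes> inv g2 \<in> ?H"
    by (auto intro: generate.incl generate.inv generate.eng)
  moreover have "g2 \<otimes> conjg g2 g1 \<otimes> inv g2 = g1"
    using assms by (simp add: m_assoc)
  ultimately have "A \<union> {g1, g2} \<subseteq> ?H"
    by (auto intro: generate.incl)
  then show "generate G (A \<union> {g1, g2}) \<subseteq> ?H"
    using assms by (simp add: generate_is_subgroup generate_subgroup_incl)
next
  let ?H = "generate G (A \<union> {g1, g2})"
  have "conjg g2 g1 \<in> ?H"
    by (auto intro: generate.incl generate.inv generate.eng)
  then have "A \<union> {g2, conjg g2 g1} \<subseteq> ?H"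
    by (auto intro: generate.incl)
  then show "generate G (A \<union> {g2, conjg g2 g1}) \<subseteq> ?H"
    using assms by (simp add: generate_is_subgroup generate_subgroup_incl)
qed

lemma fact_eq_generate: "u \<approx> w \<Longrightarrow> set u \<subseteq> Y \<Longrightarrow> generate G (set u) = generate G (set w)"
proof (induction rule: fact_eq.induct)
  case (fact_sym u w)
  then show ?case using fact_eq_words by metis
next
  case (fact_trans u v w)
  then show ?case using fact_eq_words by metis
next
  case (fact_rel1 g1 g2 u v)
  then show ?case
    using generate_swap_conjg[of "set u \<union> set v" g1 g2] gen_in_carrier
    by (auto simp: insert_commute)
next
  case (fact_rel2 g1 g2 u v)
  have "g1 \<otimes> g2 \<otimes> inv g1 \<in> carrier G" and "conjg g1 (g1 \<otimes> g2 \<otimes> inv g1) = g2"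
    using fact_rel2 gen_in_carrier by (auto simp: m_assoc)
  then show ?case
    using generate_swap_conjg[of "set u \<union> set v" "g1 \<otimes> g2 \<otimes> inv g1" g1] fact_rel2 gen_in_carrier
    by (auto simp: insert_commute)
qed simp

end

section \<open>Central elements\<close>

context conj_closed_gens
begin

lemma central_one: "central G \<one>"
  by (simp add: central_def)

lemma central_mult:
  "central G a \<Longrightarrow> central G b \<Longrightarrow> a \<in> carrier G \<Longrightarrow> b \<in> carrier G \<Longrightarrow> central G (a \<otimes> b)"
  unfolding central_def by (metis m_assoc)

lemma central_pow: "central G a \<Longrightarrow> a \<in> carrier G \<Longrightarrow> central G (a [^] (n::nat))"
  by (induction n) (auto simp: central_one central_mult)

lemma central_inv:
  assumes a: "central G a" "a \<in> carrier G"
  shows "central G (inv a)"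
proof -
  have "inv a \<otimes> g = g \<otimes> inv a" if g: "g \<in> carrier G" for g
  proof -
    have "inv a \<otimes> (a \<otimes> g) \<otimes> inv a = inv a \<otimes> (g \<otimes> a) \<otimes> inv a"
      using a g by (simp add: central_def)
    then show ?thesis using a g by (simp add: m_assoc)
  qed
  then show ?thesis by (simp add: central_def)
qed

lemma conjg_central: "central G c \<Longrightarrow> c \<in> carrier G \<Longrightarrow> g \<in> carrier G \<Longrightarrow> conjg g c = c"
  by (simp add: central_def m_assoc)

lemma conjg_by_central:
  assumes "central G c" "c \<in> carrier G" "x \<in> carrier G"
  shows "conjg c x = x"
proof -
  have "inv c \<otimes> (x \<otimes> c) = inv c \<otimes> (c \<otimes> x)"
    using assms by (simp add: central_def)
  then show ?thesis using assms by (simp add: m_assoc)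
qed

lemma conjg_inv_central: "central G c \<Longrightarrow> c \<in> carrier G \<Longrightarrow> g \<in> carrier G \<Longrightarrow> g \<otimes> c \<otimes> inv g = c"
  by (simp add: central_def m_assoc)

lemma central_lprod_concat:
  "\<forall>x\<in>set xs. set x \<subseteq> carrier G \<and> central G (lprod G x) \<Longrightarrow> central G (lprod G (concat xs))"
proof (induction xs)
  case (Cons x xs)
  then have "set (concat xs) \<subseteq> carrier G" by auto
  then show ?case using Cons lprod_append[of x "concat xs"] central_mult by auto
qed (simp add: central_one)

lemma central_if_commutes_with_generators:
  assumes gen: "generate G A = carrier G" and a: "a \<in> carrier G"
    and comm: "\<And>x. x \<in> A \<Longrightarrow> a \<otimes> x = x \<otimes> a"
  shows "central G a"
proof -
  have "a \<otimes> g = g \<otimes> a" if "g \<in> generate G A" for g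
    using that
  proof (induction rule: generate.induct)
    case (inv h)
    have "h \<in> generate G A" using inv by (rule generate.incl)
    then have h: "h \<in> carrier G" using gen by simp
    have "inv h \<otimes> (a \<otimes> h) \<otimes> inv h = inv h \<otimes> (h \<otimes> a) \<otimes> inv h"
      using comm[OF inv] by simp
    then show ?case using h a by (simp add: m_assoc)
  next
    case (eng h1 h2)
    have "h1 \<in> carrier G" "h2 \<in> carrier G" using eng.hyps gen by auto
    then show ?case using eng.IH a by (metis m_assoc)
  qed (use a comm in auto)
  then show ?thesis using gen by (simp add: central_def)
qed

text \<open>Conjugation by the powers of y permutes the finite set Y, so two powers
  induce the same permutation and their quotient commutes with every generator.\<close>
lemma exists_central_power:
  assumes fin: "finite Y" and gen: "generate G Y = carrier G" and y: "y \<in> carrier G"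
  shows "\<exists>q::nat\<ge>1. central G (y [^] q)"
proof -
  define f where "f = (\<lambda>n::nat. restrict (\<lambda>x. conjg (y [^] n) x) Y)"
  have "f ` UNIV \<subseteq> (\<Pi>\<^sub>E x\<in>Y. Y)"
    using gens_conj_closed y by (auto simp: f_def)
  moreover have "finite (\<Pi>\<^sub>E x\<in>Y. Y)"
    using fin by (simp add: finite_PiE)
  ultimately have "finite (f ` UNIV)"
    by (rule finite_subset)
  then have "\<not> inj f"
    using finite_imageD infinite_UNIV_nat by blast
  then obtain k1 k2 where "k1 \<noteq> k2" "f k1 = f k2"
    unfolding inj_def by blast
  then obtain a b where ab: "a < b" "f a = f b"
    by (metis linorder_neq_iff)
  define j where "j = b - a"
  have yc: "y [^] a \<in> carrier G" "y [^] j \<in> carrier G" using y by auto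
  have "y [^] j \<otimes> x = x \<otimes> y [^] j" if x: "x \<in> Y" for x
  proof -
    let ?x0 = "y [^] a \<otimes> x \<otimes> inv (y [^] a)"
    have x0: "?x0 \<in> Y" using gens_conj_closed' x yc by auto
    have x0_back: "conjg (y [^] a) ?x0 = x" using x gen_in_carrier yc by (simp add: m_assoc)
    have "conjg (y [^] a) ?x0 = conjg (y [^] b) ?x0"
      using ab x0 by (metis f_def restrict_apply')
    moreover have "y [^] b = y [^] a \<otimes> y [^] j"
      using ab y by (simp add: j_def nat_pow_mult)
    ultimately have "x = conjg (y [^] j) x"
      using x0_back conjg_conjg[of "y [^] a" "y [^] j" ?x0] yc x0 gen_in_carrier by simp
    then have "y [^] j \<otimes> x = y [^] j \<otimes> (inv (y [^] j) \<otimes> x \<otimes> y [^] j)" by simp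
    then show ?thesis using yc x gen_in_carrier by (simp add: m_assoc)
  qed
  then have "central G (y [^] j)"
    using central_if_commutes_with_generators[OF gen] yc by blast
  then show ?thesis using ab j_def by (intro exI[of _ j]) auto
qed

lemma exists_common_central_power:
  assumes fin: "finite Y" and gen: "generate G Y = carrier G" and C: "C \<subseteq> Y"
  shows "\<exists>p::nat\<ge>1. \<forall>y\<in>C. central G (y [^] p)"
proof -
  have "\<forall>y\<in>C. \<exists>q::nat. q \<ge> 1 \<and> central G (y [^] q)"
    using exists_central_power[OF fin gen] C gen_in_carrier by blast
  then obtain q where q: "\<forall>y\<in>C. q y \<ge> (1::nat) \<and> central G (y [^] q y)"
    by metis
  have finC: "finite C" using C fin finite_subset by auto
  have "central G (y [^] prod q C)" if y: "y \<in> C" for y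
  proof -
    obtain r where "prod q C = q y * r"
      using y finC by (metis dvd_prod_eqI dvd_def)
    then show ?thesis
      using central_pow q y C gen_in_carrier by (auto simp: nat_pow_pow[symmetric])
  qed
  moreover have "prod q C \<ge> 1"
    using q by (simp add: Suc_le_eq prod_pos)
  ultimately show ?thesis by blast
qed

lemma cls_p_central:
  assumes "finite Y" "generate G Y = carrier G" "C \<subseteq> Y"
  shows "cls_p G C \<ge> 1" and "y \<in> C \<Longrightarrow> central G (y [^] cls_p G C)"
  using LeastI_ex[OF exists_common_central_power[OF assms]] unfolding cls_p_def by blast+

text \<open>Modulo the centre, an inverse of a letter with a central power is a positive power of it.\<close>
lemma generate_central_times_word:
  assumes A: "A \<subseteq> carrier G" and pow: "\<And>z. z \<in> A \<Longrightarrow> \<exists>p::nat\<ge>1. central G (z [^] p)"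
  shows "g \<in> generate G A \<Longrightarrow>
    \<exists>zs c. set zs \<subseteq> A \<and> c \<in> carrier G \<and> central G c \<and> g = c \<otimes> lprod G zs"
proof (induction rule: generate.induct)
  case one
  show ?case by (intro exI[of _ "[]"] exI[of _ \<one>]) (simp add: central_one)
next
  case (incl z)
  then show ?case using A by (intro exI[of _ "[z]"] exI[of _ \<one>]) (auto simp: central_one)
next
  case (inv z)
  obtain p :: nat where p: "p \<ge> 1" "central G (z [^] p)" using pow[OF inv] by blast
  have z: "z \<in> carrier G" using inv A by auto
  have "inv (z [^] p) \<otimes> z [^] (p - 1) \<otimes> z = \<one>"
    using p z by (cases p) (auto simp: m_assoc nat_pow_Suc2)
  then have "inv z = inv (z [^] p) \<otimes> lprod G (replicate (p - 1) z)"
    using z by (metis inv_equality m_closed nat_pow_closed inv_closed lprod_replicate)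
  moreover have "set (replicate (p - 1) z) \<subseteq> A" using inv by auto
  ultimately show ?case using central_inv[OF p(2)] z by blast
next
  case (eng g h)
  then obtain zs1 c1 zs2 c2 where
    a: "set zs1 \<subseteq> A" "c1 \<in> carrier G" "central G c1" "g = c1 \<otimes> lprod G zs1"
       "set zs2 \<subseteq> A" "c2 \<in> carrier G" "central G c2" "h = c2 \<otimes> lprod G zs2"
    by blast
  have P: "lprod G zs1 \<in> carrier G" "lprod G zs2 \<in> carrier G" using a A by auto
  have "g \<otimes> h = c1 \<otimes> (lprod G zs1 \<otimes> c2) \<otimes> lprod G zs2"
    using a P by (simp add: m_assoc)
  also have "lprod G zs1 \<otimes> c2 = c2 \<otimes> lprod G zs1"
    using a(7) P by (simp add: central_def)
  also have "c1 \<otimes> (c2 \<otimes> lprod G zs1) \<otimes> lprod G zs2 = (c1 \<otimes> c2) \<otimes> lprod G (zs1 @ zs2)"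
    using a P A by (simp add: m_assoc lprod_append subset_trans)
  finally show ?case
    using a central_mult[of c1 c2] by (intro exI[of _ "zs1 @ zs2"] exI[of _ "c1 \<otimes> c2"]) auto
qed

lemma conjg_generate_as_word:
  assumes A: "A \<subseteq> carrier G" and pow: "\<And>z. z \<in> A \<Longrightarrow> \<exists>p::nat\<ge>1. central G (z [^] p)"
    and g: "g \<in> generate G A" and x: "x \<in> carrier G"
  shows "\<exists>zs. set zs \<subseteq> A \<and> conjg g x = conjg (lprod G zs) x"
proof -
  obtain zs c where zc: "set zs \<subseteq> A" "c \<in> carrier G" "central G c" "g = c \<otimes> lprod G zs"
    using generate_central_times_word[OF A pow g] by blast
  have "lprod G zs \<in> carrier G" using zc(1) A by auto
  then have "conjg g x = conjg (lprod G zs) (conjg c x)"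
    using zc x conjg_conjg by simp
  also have "conjg c x = x"
    using zc x conjg_by_central by blast
  finally show ?thesis using zc(1) by blast
qed

end

context conj_closed_gens
begin

lemma central_word_commutes:
  assumes F: "set F \<subseteq> Y" and cen: "central G (lprod G F)"
  shows "set w \<subseteq> Y \<Longrightarrow> w @ F \<approx> F @ w"
proof (induction w)
  case Nil
  then show ?case by (simp add: fact_eq_refl)
next
  case (Cons h w)
  then have h: "h \<in> Y" by simp
  have "h # w @ F \<approx> h # F @ w"
    using Cons by (auto intro: fact_eq_Cons)
  also have "\<dots> \<approx> (F @ [conjg (lprod G F) h]) @ w"
    using fact_eq_append_right[OF letter_past_word[OF h F]] by simp
  also have "conjg (lprod G F) h = h"
    using conjg_by_central[OF cen] F h gen_in_carrier word_in_carrier by simp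
  finally show ?case by simp
qed

lemma central_block_commutes:
  assumes "z \<in> Y" "central G (z [^] q)" "set w \<subseteq> Y"
  shows "replicate q z @ w \<approx> w @ replicate q z"
proof -
  have "set (replicate q z) \<subseteq> Y" using assms by simp
  moreover have "central G (lprod G (replicate q z))"
    using assms lprod_replicate gen_in_carrier by simp
  ultimately
  show ?thesis
    using central_word_commutes[of "replicate q z" w] assms by (simp add: fact_eq_sym)
qed

lemma central_block_conjg_letter:
  assumes z: "z \<in> Y" and c: "central G (z [^] q)" and w: "set w \<subseteq> Y" and h: "h \<in> set w"
  shows "replicate q z @ w \<approx> replicate q (conjg h z) @ w"
proof -
  obtain w1 w2 where ws: "w = w1 @ h # w2" using h split_list by metis
  have hY: "h \<in> Y" and w1: "set w1 \<subseteq> Y" and w2: "set w2 \<subseteq> Y" using w ws h by auto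
  have zc: "conjg h z \<in> Y" using gens_conj_closed z hY gen_in_carrier by auto
  have "conjg h z [^] q = z [^] q"
    using conjg_pow[of h z q] conjg_central[OF c] hY z gen_in_carrier by simp
  with c have c2: "central G (conjg h z [^] q)" by simp
  have "replicate q z @ w1 @ h # w2 \<approx> w1 @ replicate q z @ h # w2"
    using fact_eq_append_right[OF central_block_commutes[OF z c w1], of "h # w2"] by simp
  also have "\<dots> \<approx> w1 @ h # map (conjg h) (replicate q z) @ w2"
    using fact_eq_append_cong[OF word_past_letter[OF hY set_replicate_subset[OF z, of q]], of w1 w2]
    by simp
  also have "\<dots> = (w1 @ [h]) @ replicate q (conjg h z) @ w2"
    by simp
  also have "\<dots> \<approx> (replicate q (conjg h z) @ w1 @ [h]) @ w2"
    using fact_eq_append_right[OF central_block_commutes[OF zc c2, of "w1 @ [h]"]] w1 hY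
    by (auto intro: fact_eq_sym)
  finally show ?thesis using ws by simp
qed

lemma central_block_conjg:
  assumes w: "set w \<subseteq> Y" and g: "g \<in> generate G (set w)"
  shows "z \<in> Y \<Longrightarrow> central G (z [^] q) \<Longrightarrow> replicate q z @ w \<approx> replicate q (conjg g z) @ w"
  using g
proof (induction arbitrary: z rule: generate.induct)
  case one
  then show ?case using gen_in_carrier by (simp add: fact_eq_refl)
next
  case (incl h)
  then show ?case using central_block_conjg_letter w by blast
next
  case (inv h)
  have hY: "h \<in> Y" using inv w by auto
  let ?z0 = "h \<otimes> z \<otimes> inv h"
  have z0: "?z0 \<in> Y" using gens_conj_closed' inv.prems hY gen_in_carrier by auto
  have "?z0 [^] q = z [^] q"
    using conjg_pow[of "inv h" z q] conjg_inv_central[OF inv.prems(2)] hY inv.prems gen_in_carrier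
    by simp
  then have "central G (?z0 [^] q)" using inv.prems by simp
  then have "replicate q ?z0 @ w \<approx> replicate q (conjg h ?z0) @ w"
    using central_block_conjg_letter[OF z0 _ w inv.hyps] by blast
  moreover have "conjg h ?z0 = z" using hY inv.prems gen_in_carrier by (simp add: m_assoc)
  ultimately show ?case
    using hY inv.prems gen_in_carrier by (auto intro: fact_eq_sym)
next
  case (eng h1 h2)
  have h: "h1 \<in> carrier G" "h2 \<in> carrier G"
    using eng.hyps generate_in_carrier w word_in_carrier by blast+
  have z1: "conjg h1 z \<in> Y" using gens_conj_closed eng.prems h by auto
  have "conjg h1 z [^] q = z [^] q"
    using conjg_pow[of h1 z q] conjg_central[OF eng.prems(2)] h eng.prems gen_in_carrier by simp
  then have "central G (conjg h1 z [^] q)" using eng.prems by simp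
  then have "replicate q z @ w \<approx> replicate q (conjg h2 (conjg h1 z)) @ w"
    using eng.IH eng.prems z1 fact_eq_trans by blast
  then show ?case using conjg_conjg[of h1 h2 z] h eng.prems gen_in_carrier by simp
qed

lemma conjg_lprod_avoids:
  assumes D: "\<And>x h. x \<in> Y \<Longrightarrow> h \<in> D \<Longrightarrow> x \<notin> D \<Longrightarrow> conjg h x \<notin> D" and DY: "D \<subseteq> Y"
  shows "set F \<subseteq> D \<Longrightarrow> x \<in> Y \<Longrightarrow> x \<notin> D \<Longrightarrow> conjg (lprod G F) x \<in> Y \<and> conjg (lprod G F) x \<notin> D"
proof (induction F arbitrary: x)
  case Nil
  then show ?case using gen_in_carrier by simp
next
  case (Cons f F)
  have f: "f \<in> Y" "f \<in> D" and F: "set F \<subseteq> Y" using Cons.prems DY by auto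
  have "conjg f x \<in> Y" "conjg f x \<notin> D"
    using D[of x f] f Cons.prems gens_conj_closed gen_in_carrier by auto
  then have "conjg (lprod G F) (conjg f x) \<in> Y \<and> conjg (lprod G F) (conjg f x) \<notin> D"
    using Cons by auto
  then show ?case
    using conjg_conjg[of f "lprod G F" x] f F word_in_carrier Cons.prems gen_in_carrier by simp
qed

text \<open>Moving the letters of D to the front conjugates the letters they pass, so the
  condition on D says that letters outside D stay outside.\<close>
lemma gather_letters:
  assumes D: "\<And>x h. x \<in> Y \<Longrightarrow> h \<in> D \<Longrightarrow> x \<notin> D \<Longrightarrow> conjg h x \<notin> D" and DY: "D \<subseteq> Y"
  shows "set w \<subseteq> Y \<Longrightarrow>
    \<exists>w'. w \<approx> filter (\<lambda>x. x \<in> D) w @ w' \<and> set w' \<subseteq> Y \<and> (\<forall>x\<in>set w'. x \<notin> D)"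
proof (induction w)
  case Nil
  then show ?case by (auto intro: fact_eq_refl)
next
  case (Cons h t)
  then obtain t' where t': "t \<approx> filter (\<lambda>x. x \<in> D) t @ t'" "set t' \<subseteq> Y" "\<forall>x\<in>set t'. x \<notin> D"
    by auto
  have h: "h \<in> Y" using Cons by auto
  show ?case
  proof (cases "h \<in> D")
    case True
    then show ?thesis using t' fact_eq_Cons by fastforce
  next
    case False
    let ?F = "filter (\<lambda>x. x \<in> D) t"
    have FD: "set ?F \<subseteq> D" and FY: "set ?F \<subseteq> Y" using DY by auto
    have "h # t \<approx> h # ?F @ t'"
      using t' fact_eq_Cons by blast
    also have "\<dots> \<approx> (?F @ [conjg (lprod G ?F) h]) @ t'"
      using fact_eq_append_right[OF letter_past_word[OF h FY], of t'] by simp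
    finally have "h # t \<approx> ?F @ conjg (lprod G ?F) h # t'"
      by simp
    then show ?thesis
      using False conjg_lprod_avoids[OF D DY FD h False] t'
      by (intro exI[of _ "conjg (lprod G ?F) h # t'"]) auto
  qed
qed

lemma gather_letter:
  assumes b: "b \<in> Y" and w: "set w \<subseteq> Y"
  shows "\<exists>w'. w \<approx> replicate (count_list w b) b @ w' \<and> set w' \<subseteq> Y"
proof -
  have "conjg h x \<notin> {b}" if "x \<in> Y" "h \<in> {b}" "x \<notin> {b}" for x h
    using that b gen_in_carrier by (auto simp: inv_solve_left' m_assoc)
  moreover have "filter (\<lambda>x. x \<in> {b}) w = replicate (count_list w b) b"
    by (induction w) auto
  ultimately show ?thesis
    using gather_letters[of "{b}" w] b w by auto
qed

text \<open>Pigeonhole: some letter of the class occurs more than q times; gather q of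
  its copies in front and conjugate this central block into the desired letter, using that the
  remaining word, which still contains that letter, generates G.\<close>
lemma extract_central_block:
  assumes W: "set W \<subseteq> Y" and gen: "generate G (set W) = carrier G"
    and c: "c \<in> carrier G" and CY: "conj_class G c \<subseteq> Y" and fin: "finite (conj_class G c)"
    and z: "z \<in> conj_class G c" and cen: "\<forall>y\<in>conj_class G c. central G (y [^] q)"
    and big: "tau (conj_class G c) W > card (conj_class G c) * q"
  shows "\<exists>W'. W \<approx> replicate q z @ W' \<and> set W' \<subseteq> Y \<and> generate G (set W') = carrier G"
proof -
  obtain b where b: "b \<in> conj_class G c" "count_list W b > q"
    using tau_gt_imp_count_gt[OF fin big] by auto
  have bY: "b \<in> Y" using b CY by auto
  obtain w0 where w0: "W \<approx> replicate (count_list W b) b @ w0" "set w0 \<subseteq> Y"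
    using gather_letter[OF bY W] by auto
  define W' where "W' = replicate (count_list W b - q) b @ w0"
  have eq: "replicate (count_list W b) b @ w0 = replicate q b @ W'"
    using b by (simp add: W'_def replicate_add[symmetric])
  have W'Y: "set W' \<subseteq> Y" using w0 bY by (auto simp: W'_def)
  have "set (replicate (count_list W b) b @ w0) = set W'"
    using b by (auto simp: W'_def)
  then have genW': "generate G (set W') = carrier G"
    using fact_eq_generate[OF w0(1) W] gen by simp
  obtain g where g: "g \<in> carrier G" "z = conjg g b"
    using conj_class_conjugate[OF c b(1) z] by blast
  then have "replicate q b @ W' \<approx> replicate q z @ W'"
    using central_block_conjg[OF W'Y, of g b q] genW' bY b cen by auto
  then show ?thesis using w0 eq W'Y genW' fact_eq_trans by metis
qed

end

locale class_decomposition = conj_closed_gens +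
  fixes C :: "nat \<Rightarrow> 'a set" and y :: "nat \<Rightarrow> nat \<Rightarrow> 'a" and m k :: nat
  assumes finite_gens: "finite Y" and gens_generate: "generate G Y = carrier G"
    and classes: "\<forall>i\<in>{1..m}. \<exists>c\<in>carrier G. C i = conj_class G c"
    and classes_disjoint: "\<forall>i\<in>{1..m}. \<forall>j\<in>{1..m}. i \<noteq> j \<longrightarrow> C i \<inter> C j = {}"
    and classes_cover: "Y = (\<Union>i\<in>{1..m}. C i)"
    and enumeration: "\<forall>i\<in>{1..m}. bij_betw (y i) {1..card (C i)} (C i)"
    and k_le_m: "k \<le> m"
    and ample_gens: "ample G Y (\<Union>i\<in>{1..k}. C i)"
begin

abbreviation pp :: "nat \<Rightarrow> nat" where "pp i \<equiv> cls_p G (C i)"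
abbreviation nn :: "nat \<Rightarrow> nat" where "nn i \<equiv> card (C i)"
abbreviation Y' :: "'a set" where "Y' \<equiv> \<Union>i\<in>{1..k}. C i"

lemma class_subset_gens: "i \<in> {1..m} \<Longrightarrow> C i \<subseteq> Y"
  using classes_cover by auto

lemma finite_class: "i \<in> {1..m} \<Longrightarrow> finite (C i)"
  using finite_subset[OF class_subset_gens finite_gens] .

lemma Y'_subset_gens: "Y' \<subseteq> Y"
  using class_subset_gens k_le_m by fastforce

lemma class_unique: "i \<in> {1..m} \<Longrightarrow> j \<in> {1..m} \<Longrightarrow> x \<in> C i \<Longrightarrow> x \<in> C j \<Longrightarrow> i = j"
  using classes_disjoint by blast

lemma conjg_in_class_iff:
  assumes "i \<in> {1..m}" "x \<in> carrier G" "g \<in> carrier G"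
  shows "conjg g x \<in> C i \<longleftrightarrow> x \<in> C i"
proof -
  obtain c where "c \<in> carrier G" "C i = conj_class G c" using classes assms(1) by blast
  then show ?thesis using conjg_in_conj_class_iff assms by simp
qed

lemma fact_eq_tau_class:
  assumes "i \<in> {1..m}" "u \<approx> w"
  shows "tau (C i) u = tau (C i) w"
proof -
  obtain c where "c \<in> carrier G" "C i = conj_class G c" using classes assms(1) by blast
  then show ?thesis using fact_eq_tau_conj_class assms(2) by simp
qed

lemma pp_pos: "i \<in> {1..m} \<Longrightarrow> pp i \<ge> 1"
  using cls_p_central(1)[OF finite_gens gens_generate class_subset_gens] .

lemma central_pp_power: "i \<in> {1..m} \<Longrightarrow> z \<in> C i \<Longrightarrow> central G (z [^] pp i)"
  using cls_p_central(2)[OF finite_gens gens_generate class_subset_gens] .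

lemma enumeration_onto: "i \<in> {1..m} \<Longrightarrow> y i ` {1..nn i} = C i"
  using enumeration by (simp add: bij_betw_imp_surj_on)

lemma enumeration_in_class: "i \<in> {1..m} \<Longrightarrow> j \<in> {1..nn i} \<Longrightarrow> y i j \<in> C i"
  using enumeration_onto by blast

lemma enumeration_first_in_class: "i \<in> {1..m} \<Longrightarrow> y i 1 \<in> C i"
proof -
  assume i: "i \<in> {1..m}"
  then obtain c where c: "c \<in> carrier G" "C i = conj_class G c" using classes by blast
  then have "conjg \<one> c \<in> C i" unfolding conj_class_def by blast
  then have "C i \<noteq> {}" by blast
  then have "nn i \<ge> 1" using finite_class[OF i] by (simp add: Suc_le_eq card_gt_0_iff)
  then show ?thesis using enumeration_in_class[OF i] by simp
qed

lemma tau_class_word: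
  assumes "i \<in> {1..m}" "j \<in> {1..m}" "set u \<subseteq> C j"
  shows "tau (C i) u = (if i = j then length u else 0)"
proof (cases "i = j")
  case False
  then have "\<forall>x\<in>set u. x \<notin> C i" using assms class_unique by blast
  then show ?thesis using False by (simp add: tau_eq_0_iff)
qed (use assms tau_eq_length in auto)

lemma tau_concat_class_words:
  assumes "distinct is" "set is \<subseteq> {1..m}" "\<forall>i\<in>set is. set (Ls i) \<subseteq> C i" "j \<in> {1..m}"
  shows "tau (C j) (concat (map Ls is)) = (if j \<in> set is then length (Ls j) else 0)"
  using assms
proof (induction "is")
  case (Cons i "is")
  then show ?case using tau_class_word[of j i "Ls i"] by auto
qed simp

lemma class_conjugate_by_Y':
  assumes i: "i \<in> {1..m}" and b: "b \<in> C i" and z: "z \<in> C i"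
  shows "\<exists>g\<in>generate G Y'. z = conjg g b"
proof -
  obtain c where c: "c \<in> carrier G" "C i = conj_class G c" using classes i by blast
  then have "conjugate_in G b z"
    using conj_class_conjugate[OF c(1)] b z unfolding conjugate_in_def by metis
  moreover have "b \<in> Y" "z \<in> Y" using b z class_subset_gens[OF i] by auto
  ultimately show ?thesis using ample_gens unfolding ample_def by blast
qed

lemma conjg_Y'_as_word:
  assumes "g \<in> generate G Y'" "x \<in> carrier G"
  shows "\<exists>zs. set zs \<subseteq> Y' \<and> conjg g x = conjg (lprod G zs) x"
proof (rule conjg_generate_as_word[OF _ _ assms])
  show "Y' \<subseteq> carrier G" using Y'_subset_gens gens_carrier by blast
next
  fix z assume "z \<in> Y'"
  then obtain i where "i \<in> {1..m}" "z \<in> C i" using k_le_m by force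
  then show "\<exists>p::nat\<ge>1. central G (z [^] p)" using pp_pos central_pp_power by blast
qed

end

section \<open>Extracting the power of s_Y'\<close>

declare upt_Suc [simp del]

context class_decomposition
begin

text \<open>A pair (i, z) with z in C i stands for the block z^(p_i), whose product is central.\<close>
definition blocks :: "(nat \<times> 'a) list \<Rightarrow> 'a list"
  where "blocks ps = concat (map (\<lambda>(i, z). replicate (pp i) z) ps)"

definition class_pairs :: "nat \<Rightarrow> (nat \<times> 'a) list"
  where "class_pairs i = map (\<lambda>j. (i, y i j)) [1..<nn i + 1]"

definition class_word :: "nat \<Rightarrow> 'a list"
  where "class_word i = concat (map (\<lambda>j. replicate (pp i) (y i j)) [1..<nn i + 1])"

definition sY' :: "'a list"
  where "sY' = concat (map class_word [1..<k + 1])"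

lemma blocks_Nil [simp]: "blocks [] = []"
  by (simp add: blocks_def)

lemma blocks_append: "blocks (ps @ qs) = blocks ps @ blocks qs"
  by (simp add: blocks_def)

lemma blocks_concat: "blocks (concat pss) = concat (map blocks pss)"
  by (induction pss) (simp_all add: blocks_append)

lemma class_word_eq_blocks: "class_word i = blocks (class_pairs i)"
  by (simp add: class_word_def blocks_def class_pairs_def o_def)

lemma sY'_eq_blocks: "sY' = blocks (concat (map class_pairs [1..<k + 1]))"
  unfolding sY'_def blocks_concat map_map
  by (intro arg_cong[where f = concat] map_cong) (simp_all add: class_word_eq_blocks)

lemma sY'_power_eq_blocks:
  "concat (replicate d sY') = blocks (concat (replicate d (concat (map class_pairs [1..<k + 1]))))"
  by (induction d) (simp_all add: sY'_eq_blocks blocks_append)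

lemma extract_blocks:
  assumes ps: "\<forall>(i, z)\<in>set ps. i \<in> {1..m} \<and> z \<in> C i"
  shows "set W \<subseteq> Y \<Longrightarrow> generate G (set W) = carrier G \<Longrightarrow>
    \<forall>(i, z)\<in>set ps. tau (C i) W > tau (C i) (blocks ps) + nn i * pp i \<Longrightarrow>
    \<exists>W'. W \<approx> blocks ps @ W' \<and> set W' \<subseteq> Y \<and> generate G (set W') = carrier G"
  using ps
proof (induction ps arbitrary: W)
  case Nil
  then show ?case by (auto simp: blocks_def intro: fact_eq_refl)
next
  case (Cons iz ps)
  obtain i z where iz: "iz = (i, z)" by fastforce
  have i: "i \<in> {1..m}" and z: "z \<in> C i" using Cons.prems(4) iz by auto
  obtain c where c: "c \<in> carrier G" "C i = conj_class G c" using classes i by blast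
  have "tau (C i) W > nn i * pp i"
    using Cons.prems(3) iz by auto
  then obtain W1 where W1: "W \<approx> replicate (pp i) z @ W1" "set W1 \<subseteq> Y" "generate G (set W1) = carrier G"
    using extract_central_block[OF Cons.prems(1,2) c(1), of z "pp i"] c(2)
      class_subset_gens[OF i] finite_class[OF i] z central_pp_power[OF i]
    by auto
  have "tau (C j) W1 > tau (C j) (blocks ps) + nn j * pp j" if "(j, x) \<in> set ps" for j x
  proof -
    have "j \<in> {1..m}" using that Cons.prems(4) by auto
    then have "tau (C j) W = tau (C j) (replicate (pp i) z) + tau (C j) W1"
      using fact_eq_tau_class W1(1) by simp
    moreover have "tau (C j) W > tau (C j) (replicate (pp i) z) + tau (C j) (blocks ps) + nn j * pp j"
      using Cons.prems(3) that iz by (auto simp: blocks_def)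
    ultimately show ?thesis by linarith
  qed
  then obtain W' where W': "W1 \<approx> blocks ps @ W'" "set W' \<subseteq> Y" "generate G (set W') = carrier G"
    using Cons.IH[OF W1(2,3)] Cons.prems(4) by fastforce
  have "W \<approx> replicate (pp i) z @ blocks ps @ W'"
    using W1(1) fact_eq_append_left[OF W'(1)] fact_eq_trans by blast
  then show ?case using W' iz by (auto simp: blocks_def)
qed

lemma set_class_word: "i \<in> {1..m} \<Longrightarrow> set (class_word i) = C i"
proof -
  assume i: "i \<in> {1..m}"
  have "set [1..<nn i + 1] = {1..nn i}" by auto
  then have "set (class_word i) = y i ` {1..nn i}"
    using pp_pos[OF i] by (auto simp: class_word_def image_iff)
  then show ?thesis using enumeration_onto[OF i] by simp
qed

lemma set_sY': "set sY' = Y'"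
  using set_class_word k_le_m by (simp add: sY'_def atLeastLessThanSuc_atLeastAtMost)

lemma tau_sY':
  assumes i: "i \<in> {1..m}"
  shows "tau (C i) sY' = (if i \<le> k then nn i * pp i else 0)"
proof -
  have "tau (C i) sY' = (if i \<in> set [1..<k + 1] then length (class_word i) else 0)"
    unfolding sY'_def
  proof (rule tau_concat_class_words)
    show "\<forall>i\<in>set [1..<k + 1]. set (class_word i) \<subseteq> C i"
      using k_le_m set_class_word by auto
  qed (use i k_le_m in auto)
  moreover have "length (class_word i) = nn i * pp i"
    by (simp add: class_word_def length_concat o_def sum_list_triv)
  ultimately show ?thesis using i by auto
qed

lemma central_class_word:
  assumes i: "i \<in> {1..m}"
  shows "central G (lprod G (class_word i))"
  unfolding class_word_def
proof (intro central_lprod_concat ballI conjI)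
  have upt: "set [1..<nn i + 1] = {1..nn i}" by auto
  fix u assume "u \<in> set (map (\<lambda>j. replicate (pp i) (y i j)) [1..<nn i + 1])"
  then obtain j where j: "j \<in> {1..nn i}" and u: "u = replicate (pp i) (y i j)"
    unfolding set_map upt by blast
  have "y i j \<in> carrier G"
    using enumeration_in_class[OF i j] class_subset_gens[OF i] gen_in_carrier by blast
  then show "set u \<subseteq> carrier G" "central G (lprod G u)"
    using central_pp_power[OF i enumeration_in_class[OF i j]] by (auto simp: u lprod_replicate)
qed

lemma central_sY': "central G (lprod G sY')"
  unfolding sY'_def
proof (intro central_lprod_concat ballI conjI)
  have upt: "set [1..<k + 1] = {1..k}" by auto
  fix u assume "u \<in> set (map class_word [1..<k + 1])"
  then obtain i where "i \<in> {1..k}" "u = class_word i" unfolding set_map upt by blast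
  moreover from this have i: "i \<in> {1..m}" using k_le_m by auto
  ultimately show "set u \<subseteq> carrier G" "central G (lprod G u)"
    using set_class_word[OF i] class_subset_gens[OF i] gens_carrier central_class_word[OF i] by blast+
qed

end

section \<open>Conjugating letters with the help of a reservoir\<close>

context class_decomposition
begin

definition reservoir :: "'a list \<Rightarrow> bool"
  where "reservoir R \<longleftrightarrow> set R \<subseteq> Y \<and> (\<forall>i\<in>{k+1..m}. tau (C i) R = 0) \<and>
    (\<forall>j\<in>{1..k}. tau (C j) R > nn j * (pp j - 1))"

lemma reservoir_tau_cong:
  assumes "reservoir R" "set R' \<subseteq> Y" "\<forall>i\<in>{1..m}. tau (C i) R' = tau (C i) R"
  shows "reservoir R'"
  using assms k_le_m by (auto simp: reservoir_def)

text \<open>By pigeonhole a reservoir contains p_j copies of one letter of C j; gathered, they form a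
  central block that Y', which X contains, conjugates into any z in C j.\<close>
lemma supply_block:
  assumes j: "j \<in> {1..k}" and z: "z \<in> C j" and X: "set X \<subseteq> Y" "Y' \<subseteq> set X" and R: "reservoir R"
  shows "\<exists>R2. X @ R \<approx> replicate (pp j) z @ X @ R2 \<and> set R2 \<subseteq> Y"
proof -
  have jm: "j \<in> {1..m}" using j k_le_m by auto
  have RY: "set R \<subseteq> Y" and "tau (C j) R > nn j * (pp j - 1)"
    using R j by (auto simp: reservoir_def)
  then obtain b where "b \<in> C j" "count_list R b > pp j - 1"
    using tau_gt_imp_count_gt[OF finite_class[OF jm]] by blast
  then have b: "b \<in> C j" "count_list R b \<ge> pp j" using pp_pos[OF jm] by auto
  have bY: "b \<in> Y" using b class_subset_gens[OF jm] by auto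
  obtain R0 where R0: "R \<approx> replicate (count_list R b) b @ R0" "set R0 \<subseteq> Y"
    using gather_letter[OF bY RY] by blast
  define R1 where "R1 = replicate (count_list R b - pp j) b @ R0"
  have R1Y: "set R1 \<subseteq> Y" using R0 bY by (auto simp: R1_def)
  have cb: "central G (b [^] pp j)" using central_pp_power[OF jm b(1)] .
  have "replicate (count_list R b) b @ R0 = replicate (pp j) b @ R1"
    using b by (simp add: R1_def replicate_add[symmetric])
  then have "X @ R \<approx> X @ replicate (pp j) b @ R1"
    using fact_eq_append_left[OF R0(1)] by simp
  also have "\<dots> \<approx> replicate (pp j) b @ X @ R1"
    using fact_eq_append_right[OF fact_eq_sym[OF central_block_commutes[OF bY cb X(1)]], of R1] by simp
  also have "\<dots> \<approx> replicate (pp j) z @ X @ R1"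
  proof -
    obtain g where g: "g \<in> generate G Y'" "z = conjg g b"
      using class_conjugate_by_Y'[OF jm b(1) z] by blast
    have "generate G Y' \<subseteq> generate G (set (X @ R1))"
      using X(2) by (intro mono_generate) auto
    then show ?thesis
      using central_block_conjg[of "X @ R1" g b "pp j"] X R1Y bY cb g by auto
  qed
  finally show ?thesis using R1Y by blast
qed

lemma conjugate_front_letter:
  assumes c: "c \<in> Y" and z: "z \<in> Y'" and X: "set X \<subseteq> Y" "Y' \<subseteq> set X" and R: "reservoir R"
  shows "\<exists>R'. reservoir R' \<and> c # X @ R \<approx> conjg z c # X @ R'"
proof -
  obtain j where j: "j \<in> {1..k}" "z \<in> C j" using z by blast
  then have jm: "j \<in> {1..m}" using k_le_m by auto
  have zY: "z \<in> Y" using j class_subset_gens[OF jm] by auto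
  obtain R2 where R2: "X @ R \<approx> replicate (pp j) z @ X @ R2" "set R2 \<subseteq> Y"
    using supply_block[OF j X R] by blast
  let ?c' = "conjg z c"
  let ?U = "conjg ?c' z # replicate (pp j - 1) z"
  let ?P = "lprod G X"
  have c'Y: "?c' \<in> Y" using gens_conj_closed c zY gen_in_carrier by auto
  have UY: "set ?U \<subseteq> Y" using gens_conj_closed zY c'Y gen_in_carrier by auto
  have UC: "set ?U \<subseteq> C j"
    using conjg_in_class_iff[OF jm] j zY c'Y gen_in_carrier by auto
  define U' where "U' = map (conjg ?P) ?U"
  have "replicate (pp j) z = z # replicate (pp j - 1) z"
    using pp_pos[OF jm] by (cases "pp j") auto
  then have "c # X @ R \<approx> c # z # replicate (pp j - 1) z @ X @ R2"
    using fact_eq_Cons[OF R2(1)] by simp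
  also have "\<dots> \<approx> z # ?c' # replicate (pp j - 1) z @ X @ R2"
    using fact_eq_swap_right c zY by blast
  also have "\<dots> \<approx> ?c' # ?U @ X @ R2"
    using fact_eq_swap_right zY c'Y by simp
  also have "\<dots> \<approx> ?c' # X @ U' @ R2"
    using fact_eq_Cons[OF fact_eq_append_right[OF word_past_word[OF UY X(1)], of R2]]
    by (simp add: U'_def)
  finally have fe: "c # X @ R \<approx> ?c' # X @ U' @ R2" .
  have U'Y: "set U' \<subseteq> Y"
    using UY gens_conj_closed X(1) word_in_carrier by (auto simp: U'_def)
  have U'C: "set U' \<subseteq> C j"
    using UC UY conjg_in_class_iff[OF jm] X(1) word_in_carrier gen_in_carrier by (auto simp: U'_def)
  have "length U' = pp j" using pp_pos[OF jm] by (simp add: U'_def)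
  then have "tau (C i) U' = tau (C i) (replicate (pp j) z)" if i: "i \<in> {1..m}" for i
    using tau_class_word[OF i jm U'C] class_unique[OF i jm] j(2) by auto
  moreover have "tau (C i) R = tau (C i) (replicate (pp j) z) + tau (C i) R2" if i: "i \<in> {1..m}" for i
    using fact_eq_tau_class[OF i R2(1)] by simp
  ultimately have "reservoir (U' @ R2)"
    using reservoir_tau_cong[OF R] U'Y R2(2) by simp
  then show ?thesis using fe by blast
qed

lemma conjugate_front_letter_word:
  assumes X: "set X \<subseteq> Y" "Y' \<subseteq> set X"
  shows "set zs \<subseteq> Y' \<Longrightarrow> c \<in> Y \<Longrightarrow> reservoir R \<Longrightarrow>
    \<exists>R'. reservoir R' \<and> c # X @ R \<approx> conjg (lprod G zs) c # X @ R'"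
proof (induction zs arbitrary: c R)
  case Nil
  then show ?case using gen_in_carrier by (auto intro: fact_eq_refl)
next
  case (Cons z zs)
  have "set (z # zs) \<subseteq> carrier G"
    using Cons.prems(1) Y'_subset_gens gens_carrier by blast
  then have zc: "z \<in> carrier G" and zsc: "set zs \<subseteq> carrier G" by auto
  obtain R1 where R1: "reservoir R1" "c # X @ R \<approx> conjg z c # X @ R1"
    using conjugate_front_letter[OF Cons.prems(2) _ X Cons.prems(3)] Cons.prems(1) by auto
  have "conjg z c \<in> Y" using gens_conj_closed Cons.prems(2) zc by blast
  moreover have "set zs \<subseteq> Y'" using Cons.prems(1) by simp
  ultimately obtain R' where R': "reservoir R'" "conjg z c # X @ R1 \<approx> conjg (lprod G zs) (conjg z c) # X @ R'"
    using Cons.IH R1(1) by blast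
  have "conjg (lprod G zs) (conjg z c) = conjg (lprod G (z # zs)) c"
    using conjg_conjg zc zsc Cons.prems(2) gen_in_carrier by simp
  then show ?case using R1 R' fact_eq_trans by metis
qed

lemma conjugate_prefix:
  assumes T: "set T \<subseteq> Y" "Y' \<subseteq> set T"
    and f: "\<forall>c\<in>set L. \<exists>g\<in>generate G Y'. f c = conjg g c"
  shows "set L \<subseteq> Y \<Longrightarrow> reservoir R \<Longrightarrow> \<exists>R'. reservoir R' \<and> L @ T @ R \<approx> map f L @ T @ R'"
  using f
proof (induction L arbitrary: R)
  case Nil
  then show ?case using fact_eq_refl by auto
next
  case (Cons c L)
  have c: "c \<in> Y" and LY: "set L \<subseteq> Y" using Cons.prems(1) by auto
  obtain R1 where R1: "reservoir R1" "L @ T @ R \<approx> map f L @ T @ R1"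
    using Cons.IH[OF LY Cons.prems(2)] Cons.prems(3) by auto
  have fY: "f c' \<in> Y" if c': "c' \<in> set L" for c'
  proof -
    obtain g where g: "g \<in> generate G Y'" "f c' = conjg g c'" using Cons.prems(3) c' by auto
    have "g \<in> carrier G" using generate_in_carrier[OF _ g(1)] Y'_subset_gens gens_carrier by blast
    then show ?thesis using gens_conj_closed c' LY g(2) by auto
  qed
  obtain g where g: "g \<in> generate G Y'" "f c = conjg g c" using Cons.prems(3) by auto
  obtain zs where zs: "set zs \<subseteq> Y'" "conjg g c = conjg (lprod G zs) c"
    using conjg_Y'_as_word[OF g(1)] c gen_in_carrier by blast
  have X: "set (map f L @ T) \<subseteq> Y" "Y' \<subseteq> set (map f L @ T)" using fY T by auto
  obtain R' where R': "reservoir R'" "c # (map f L @ T) @ R1 \<approx> f c # (map f L @ T) @ R'"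
    using conjugate_front_letter_word[OF X zs(1) c R1(1)] g(2) zs(2) by auto
  have "c # L @ T @ R \<approx> c # map f L @ T @ R1" using fact_eq_Cons[OF R1(2)] .
  also have "\<dots> \<approx> f c # map f L @ T @ R'" using R'(2) by simp
  finally show ?case using R'(1) by auto
qed

end

context class_decomposition
begin

lemma gather_classes:
  "distinct is \<Longrightarrow> set is \<subseteq> {1..m} \<Longrightarrow> set w \<subseteq> Y \<Longrightarrow>
   \<exists>Ls R. w \<approx> concat (map Ls is) @ R \<and> (\<forall>i\<in>set is. set (Ls i) \<subseteq> C i) \<and>
     set R \<subseteq> Y \<and> (\<forall>i\<in>set is. tau (C i) R = 0)"
proof (induction "is" arbitrary: w)
  case Nil
  show ?case by (rule exI[of _ "\<lambda>_. []"], rule exI[of _ w]) (use Nil in \<open>auto intro: fact_eq_refl\<close>)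
next
  case (Cons i "is")
  have i: "i \<in> {1..m}" using Cons.prems by auto
  have "conjg h x \<notin> C i" if "x \<in> Y" "h \<in> C i" "x \<notin> C i" for x h
    using that conjg_in_class_iff[OF i] class_subset_gens[OF i] gen_in_carrier by blast
  then obtain w1 where w1: "w \<approx> filter (\<lambda>x. x \<in> C i) w @ w1" "set w1 \<subseteq> Y" "\<forall>x\<in>set w1. x \<notin> C i"
    using gather_letters[OF _ class_subset_gens[OF i] Cons.prems(3)] by blast
  obtain Ls R where LR: "w1 \<approx> concat (map Ls is) @ R" "\<forall>i\<in>set is. set (Ls i) \<subseteq> C i"
    "set R \<subseteq> Y" "\<forall>i\<in>set is. tau (C i) R = 0"
    using Cons.IH[OF _ _ w1(2)] Cons.prems by auto
  define Ls' where "Ls' = Ls(i := filter (\<lambda>x. x \<in> C i) w)"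
  have "i \<notin> set is" using Cons.prems(1) by simp
  then have "map Ls' is = map Ls is"
    by (intro map_cong) (auto simp: Ls'_def)
  moreover have "Ls' i = filter (\<lambda>x. x \<in> C i) w"
    by (simp add: Ls'_def)
  ultimately have "concat (map Ls' (i # is)) = filter (\<lambda>x. x \<in> C i) w @ concat (map Ls is)"
    by (simp only: list.map concat.simps)
  then have "w \<approx> concat (map Ls' (i # is)) @ R"
    using fact_eq_trans[OF w1(1) fact_eq_append_left[OF LR(1)]] by simp
  moreover have "\<forall>j\<in>set (i # is). set (Ls' j) \<subseteq> C j"
    using LR(2) by (auto simp: Ls'_def)
  moreover have "tau (C i) w1 = 0"
    using w1(3) by (simp add: tau_eq_0_iff)
  then have "tau (C i) R = 0"
    using fact_eq_tau_class[OF i LR(1)] by simp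
  ultimately show ?case
    using LR(3,4) by (intro exI[of _ Ls'] exI[of _ R]) auto
qed

definition class_rep :: "'a \<Rightarrow> 'a"
  where "class_rep x = y (THE i. i \<in> {1..m} \<and> x \<in> C i) 1"

lemma class_rep_eq: "i \<in> {1..m} \<Longrightarrow> x \<in> C i \<Longrightarrow> class_rep x = y i 1"
  unfolding class_rep_def using class_unique by (metis (no_types, lifting) the_equality)

lemma map_class_rep_concat:
  "\<forall>i\<in>set is. i \<in> {1..m} \<and> set (Ls i) \<subseteq> C i \<Longrightarrow>
   map class_rep (concat (map Ls is)) = concat (map (\<lambda>i. replicate (length (Ls i)) (y i 1)) is)"
proof (induction "is")
  case (Cons i "is")
  then have "map class_rep (Ls i) = map (\<lambda>_. y i 1) (Ls i)"
    using class_rep_eq by (intro map_cong) auto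
  then show ?case using Cons by (simp add: map_replicate_const)
qed simp

lemma class_rep_conjugate: "i \<in> {1..m} \<Longrightarrow> x \<in> C i \<Longrightarrow> \<exists>g\<in>generate G Y'. class_rep x = conjg g x"
  using class_rep_eq class_conjugate_by_Y' enumeration_first_in_class by metis

lemma dist_Y_le_d_Y:
  assumes "x \<in> Y" "x' \<in> Y" "conjugate_in G x x'"
  shows "dist_Y G Y' x x' \<le> d_Y G Y Y'"
proof -
  let ?S = "{dist_Y G Y' x x' | x x'. x \<in> Y \<and> x' \<in> Y \<and> conjugate_in G x x'}"
  have "?S \<subseteq> (\<lambda>(a, b). dist_Y G Y' a b) ` (Y \<times> Y)" by auto
  then have "finite ?S" using finite_gens finite_subset by blast
  then show ?thesis unfolding d_Y_def using assms by (intro Max_ge) auto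
qed

text \<open>If d = 0 every class is a singleton, since d(x, x') bounds the length of a word conjugating
  x into x'.\<close>
lemma class_rep_ident_if_d_Y_0:
  assumes d0: "d_Y G Y Y' = 0" and i: "i \<in> {1..m}" and x: "x \<in> C i"
  shows "class_rep x = x"
proof -
  let ?P = "\<lambda>r. \<exists>zs. length zs = r \<and> set zs \<subseteq> Y' \<and> class_rep x = inv (lprod G zs) \<otimes> x \<otimes> lprod G zs"
  have xY: "x \<in> Y" and x'Y: "class_rep x \<in> Y"
    using x enumeration_first_in_class[OF i] class_rep_eq[OF i x] class_subset_gens[OF i] by auto
  obtain g where g: "g \<in> generate G Y'" "class_rep x = conjg g x"
    using class_rep_conjugate[OF i x] by blast
  then obtain zs where "set zs \<subseteq> Y'" "class_rep x = conjg (lprod G zs) x"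
    using conjg_Y'_as_word[OF g(1)] xY gen_in_carrier by metis
  then have "?P (LEAST r. ?P r)" by (intro LeastI[of ?P "length zs"]) blast
  moreover have "conjugate_in G x (class_rep x)"
    using g generate_in_carrier[OF _ g(1)] Y'_subset_gens gens_carrier unfolding conjugate_in_def by blast
  then have "(LEAST r. ?P r) = 0"
    using dist_Y_le_d_Y[OF xY x'Y] d0 unfolding dist_Y_def by simp
  ultimately show ?thesis using xY gen_in_carrier by simp
qed

end

section \<open>The normal form\<close>

lemma tau_concat_replicate: "tau C (concat (replicate d u)) = d * tau C u"
  by (induction d) auto

context class_decomposition
begin

lemma extract_sY'_power:
  assumes s: "set s \<subseteq> Y" "generate G (set s) = carrier G"
    and big: "\<forall>i\<in>{1..k}. tau (C i) s \<ge> 2 * nn i * pp i * d + 1"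
  shows "\<exists>W. s \<approx> concat (replicate d sY') @ W \<and> set W \<subseteq> Y \<and>
    (\<forall>i\<in>{1..m}. tau (C i) W + (if i \<le> k then d * (nn i * pp i) else 0) = tau (C i) s)"
proof -
  let ?ps = "concat (replicate d (concat (map class_pairs [1..<k + 1])))"
  have ps: "d \<ge> 1 \<and> i \<in> {1..k} \<and> z \<in> C i" if "(i, z) \<in> set ?ps" for i z
  proof -
    from that have "d \<noteq> 0" "(i, z) \<in> set (concat (map class_pairs [1..<k + 1]))"
      by (auto simp: set_replicate_conv_if split: if_splits)
    then have "d \<ge> 1" "i \<in> {1..k}" "z \<in> y i ` {1..nn i}"
      by (auto simp: class_pairs_def)
    then show ?thesis using enumeration_onto k_le_m by auto
  qed
  have tau_T: "tau (C i) (blocks ?ps) = (if i \<le> k then d * (nn i * pp i) else 0)"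
    if "i \<in> {1..m}" for i
  proof -
    have "tau (C i) (concat (replicate d sY')) = (if i \<le> k then d * (nn i * pp i) else 0)"
      using tau_sY'[OF that] by (simp add: tau_concat_replicate)
    then show ?thesis by (simp only: sY'_power_eq_blocks)
  qed
  have "i \<in> {1..m} \<and> z \<in> C i \<and> tau (C i) s > tau (C i) (blocks ?ps) + nn i * pp i"
    if "(i, z) \<in> set ?ps" for i z
  proof -
    have d: "d \<ge> 1" and i: "i \<in> {1..k}" and z: "z \<in> C i" using ps[OF that] by auto
    then have i': "i \<in> {1..m}" using k_le_m by auto
    have "2 * nn i * pp i * d = d * (nn i * pp i) + d * (nn i * pp i)"
      by (simp add: algebra_simps)
    moreover have "nn i * pp i \<le> d * (nn i * pp i)" using d by simp
    moreover have "2 * nn i * pp i * d + 1 \<le> tau (C i) s" using big i by blast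
    ultimately have "tau (C i) s > d * (nn i * pp i) + nn i * pp i" by linarith
    then show ?thesis using tau_T[OF i'] i i' z by simp
  qed
  then obtain W where W: "s \<approx> blocks ?ps @ W" "set W \<subseteq> Y"
    using extract_blocks[OF _ s] by blast
  have "tau (C i) W + (if i \<le> k then d * (nn i * pp i) else 0) = tau (C i) s" if "i \<in> {1..m}" for i
    using fact_eq_tau_class[OF that W(1)] tau_T[OF that] by simp
  then show ?thesis using W unfolding sY'_power_eq_blocks by blast
qed

lemma extract_and_sort:
  assumes s: "set s \<subseteq> Y" "generate G (set s) = carrier G"
    and big: "\<forall>i\<in>{1..k}. tau (C i) s \<ge> 2 * nn i * pp i * d + 1"
  shows "\<exists>Ls R. s \<approx> concat (map Ls [k+1..<m+1]) @ concat (replicate d sY') @ R \<and>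
    (\<forall>i\<in>{k+1..m}. set (Ls i) \<subseteq> C i \<and> length (Ls i) = tau (C i) s) \<and>
    set R \<subseteq> Y \<and> (\<forall>i\<in>{k+1..m}. tau (C i) R = 0) \<and>
    (\<forall>j\<in>{1..k}. tau (C j) R + d * (nn j * pp j) = tau (C j) s)"
proof -
  let ?T = "concat (replicate d sY')"
  obtain W where W: "s \<approx> ?T @ W" "set W \<subseteq> Y"
    "\<forall>i\<in>{1..m}. tau (C i) W + (if i \<le> k then d * (nn i * pp i) else 0) = tau (C i) s"
    using extract_sY'_power[OF s big] by blast
  have sub: "set [k+1..<m+1] \<subseteq> {1..m}" and upt_eq: "set [k+1..<m+1] = {k+1..m}"
    by (auto simp: subset_iff)
  obtain Ls R where LR: "W \<approx> concat (map Ls [k+1..<m+1]) @ R"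
    "\<forall>i\<in>set [k+1..<m+1]. set (Ls i) \<subseteq> C i" "set R \<subseteq> Y" "\<forall>i\<in>{k+1..m}. tau (C i) R = 0"
    using gather_classes[OF distinct_upt sub W(2)] unfolding upt_eq by blast
  let ?A = "concat (map Ls [k+1..<m+1])"
  have TY: "set ?T \<subseteq> Y" using set_sY' Y'_subset_gens by auto
  have AY: "set ?A \<subseteq> Y" using fact_eq_words[OF LR(1)] W(2) by simp
  have "central G (lprod G ?T)"
    by (rule central_lprod_concat) (use set_sY' Y'_subset_gens gens_carrier central_sY' in auto)
  then have "?A @ ?T \<approx> ?T @ ?A" using central_word_commutes TY AY by blast
  have "s \<approx> ?T @ ?A @ R"
    using fact_eq_trans[OF W(1) fact_eq_append_left[OF LR(1)]] .
  also have "\<dots> \<approx> ?A @ ?T @ R"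
    using fact_eq_append_right[OF fact_eq_sym[OF \<open>?A @ ?T \<approx> ?T @ ?A\<close>], of R] by simp
  finally have s_eq: "s \<approx> ?A @ ?T @ R" .
  have tau_W: "tau (C i) W = (if i \<in> set [k+1..<m+1] then length (Ls i) else 0) + tau (C i) R"
    if "i \<in> {1..m}" for i
    using fact_eq_tau_class[OF that LR(1)] tau_concat_class_words[OF distinct_upt sub LR(2) that] by simp
  have Ls: "set (Ls i) \<subseteq> C i \<and> length (Ls i) = tau (C i) s" if i: "i \<in> {k+1..m}" for i
  proof -
    have i': "i \<in> {1..m}" "i \<in> set [k+1..<m+1]" "\<not> i \<le> k" using i by auto
    then have "tau (C i) W = length (Ls i)" using tau_W bspec[OF LR(4) i] by simp
    moreover have "tau (C i) W = tau (C i) s" using bspec[OF W(3) i'(1)] i'(3) by simp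
    ultimately show ?thesis using bspec[OF LR(2) i'(2)] by simp
  qed
  have R: "tau (C j) R + d * (nn j * pp j) = tau (C j) s" if j: "j \<in> {1..k}" for j
  proof -
    have j': "j \<in> {1..m}" "j \<notin> set [k+1..<m+1]" "j \<le> k" using j k_le_m by auto
    then show ?thesis using tau_W[OF j'(1)] bspec[OF W(3) j'(1)] by simp
  qed
  show ?thesis
    using s_eq Ls R LR(3,4) by blast
qed

lemma reservoir_after_extraction:
  assumes d: "d \<noteq> 0" and big: "\<forall>i\<in>{1..k}. tau (C i) s \<ge> 2 * nn i * pp i * d + 1"
    and R: "set R \<subseteq> Y" "\<forall>i\<in>{k+1..m}. tau (C i) R = 0"
      "\<forall>j\<in>{1..k}. tau (C j) R + d * (nn j * pp j) = tau (C j) s"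
  shows "reservoir R"
  unfolding reservoir_def
proof (intro conjI ballI)
  fix j assume j: "j \<in> {1..k}"
  have "2 * nn j * pp j * d + 1 \<le> tau (C j) s" using big j by blast
  moreover have "tau (C j) R + d * (nn j * pp j) = tau (C j) s" using R(3) j by blast
  moreover have "nn j * (pp j - 1) \<le> nn j * pp j" by simp
  moreover have "nn j * pp j \<le> d * (nn j * pp j)" using d by simp
  moreover have "2 * nn j * pp j * d = d * (nn j * pp j) + d * (nn j * pp j)"
    by (simp add: algebra_simps)
  ultimately show "tau (C j) R > nn j * (pp j - 1)" by linarith
qed (use R in blast)+

lemma normalize_sorted_prefix:
  assumes Ls: "\<forall>i\<in>{k+1..m}. set (Ls i) \<subseteq> C i"
    and R: "set R \<subseteq> Y" "\<forall>i\<in>{k+1..m}. tau (C i) R = 0" "d_Y G Y Y' \<noteq> 0 \<Longrightarrow> reservoir R"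
  defines "A \<equiv> concat (map Ls [k+1..<m+1])" and "T \<equiv> concat (replicate (d_Y G Y Y') sY')"
  shows "\<exists>R'. set R' \<subseteq> Y \<and> (\<forall>i\<in>{k+1..m}. tau (C i) R' = 0) \<and>
    A @ T @ R \<approx> map class_rep A @ T @ R'"
proof -
  have class_of: "\<exists>i\<in>{1..m}. x \<in> C i" if "x \<in> set A" for x
    using that Ls k_le_m by (fastforce simp: A_def)
  show ?thesis
  proof (cases "d_Y G Y Y' = 0")
    case True
    then have "map class_rep A = A"
      using class_of class_rep_ident_if_d_Y_0 by (metis map_idI)
    then show ?thesis using R fact_eq_refl by auto
  next
    case False
    have "set A \<subseteq> Y" using class_of class_subset_gens by blast
    moreover have "set T \<subseteq> Y" "Y' \<subseteq> set T" using set_sY' Y'_subset_gens False by (auto simp: T_def)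
    moreover have "\<forall>c\<in>set A. \<exists>g\<in>generate G Y'. class_rep c = conjg g c"
      using class_of class_rep_conjugate by blast
    ultimately obtain R' where "reservoir R'" "A @ T @ R \<approx> map class_rep A @ T @ R'"
      using conjugate_prefix[of T A class_rep R] R(3) False by blast
    then show ?thesis unfolding reservoir_def by blast
  qed
qed

lemma normal_form:
  assumes s: "set s \<subseteq> Y" "generate G (set s) = carrier G"
    and big: "\<forall>i\<in>{1..k}. tau (C i) s \<ge> 2 * nn i * pp i * d_Y G Y Y' + 1"
  shows "\<exists>s1. set s1 \<subseteq> Y \<and> (\<forall>i\<in>{k+1..m}. tau (C i) s1 = 0) \<and>
    s \<approx> concat (map (\<lambda>i. replicate (tau (C i) s) (y i 1)) [k+1..<m+1])
      @ concat (replicate (d_Y G Y Y') sY') @ s1"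
proof -
  let ?T = "concat (replicate (d_Y G Y Y') sY')"
  obtain Ls R where LR: "s \<approx> concat (map Ls [k+1..<m+1]) @ ?T @ R"
    "\<forall>i\<in>{k+1..m}. set (Ls i) \<subseteq> C i \<and> length (Ls i) = tau (C i) s"
    "set R \<subseteq> Y" "\<forall>i\<in>{k+1..m}. tau (C i) R = 0"
    "\<forall>j\<in>{1..k}. tau (C j) R + d_Y G Y Y' * (nn j * pp j) = tau (C j) s"
    using extract_and_sort[OF s big] by blast
  let ?A = "concat (map Ls [k+1..<m+1])"
  obtain R' where R': "set R' \<subseteq> Y" "\<forall>i\<in>{k+1..m}. tau (C i) R' = 0"
    "?A @ ?T @ R \<approx> map class_rep ?A @ ?T @ R'"
    using normalize_sorted_prefix[of Ls R] reservoir_after_extraction[OF _ big] LR(2-5) by blast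
  have upt_eq: "set [k+1..<m+1] = {k+1..m}" by auto
  have rep_eq: "map (\<lambda>i. replicate (length (Ls i)) (y i 1)) [k+1..<m+1]
      = map (\<lambda>i. replicate (tau (C i) s) (y i 1)) [k+1..<m+1]"
    by (rule map_cong) (simp_all add: upt_eq LR(2))
  have "\<forall>i\<in>set [k+1..<m+1]. i \<in> {1..m} \<and> set (Ls i) \<subseteq> C i"
    unfolding upt_eq using LR(2) by simp
  then have "map class_rep ?A = concat (map (\<lambda>i. replicate (tau (C i) s) (y i 1)) [k+1..<m+1])"
    unfolding rep_eq[symmetric] by (rule map_class_rep_concat)
  moreover have "s \<approx> map class_rep ?A @ ?T @ R'"
    using fact_eq_trans[OF LR(1) R'(3)] .
  ultimately show ?thesis using R'(1,2) by auto
qed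

end

lemma finite_C_group_conj_closed_gens: "finite_C_group G Y \<Longrightarrow> conj_closed_gens G Y"
  unfolding finite_C_group_def conj_closed_gens_def conj_closed_gens_axioms_def by blast

theorem proposition2p10:
  fixes G :: "('a, 'b) monoid_scheme"
    and Y :: "'a set"
    and C :: "nat \<Rightarrow> 'a set"
    and y :: "nat \<Rightarrow> nat \<Rightarrow> 'a"
    and m k :: nat
    and s :: "'a list"
  assumes CG: "finite_C_group G Y"
    and classes: "\<forall>i\<in>{1..m}. \<exists>c\<in>carrier G. C i = conj_class G c"
    and disj: "\<forall>i\<in>{1..m}. \<forall>j\<in>{1..m}. i \<noteq> j \<longrightarrow> C i \<inter> C j = {}"
    and cover: "Y = (\<Union>i\<in>{1..m}. C i)"
    and enum: "\<forall>i\<in>{1..m}. bij_betw (y i) {1..card (C i)} (C i)"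
    and km: "k \<le> m"
    and amp: "ample G Y (\<Union>i\<in>{1..k}. C i)"
    and s_in: "set s \<subseteq> Y"
    and s_gen: "generate G (set s) = carrier G"
    and tau_big: "\<forall>i\<in>{1..k}. tau (C i) s \<ge>
                    2 * card (C i) * cls_p G (C i) * d_Y G Y (\<Union>i\<in>{1..k}. C i) + 1"
  shows "\<exists>s1. set s1 \<subseteq> Y \<and> (\<forall>i\<in>{k+1..m}. tau (C i) s1 = 0) \<and>
           fact_eq G Y s
             (concat (map (\<lambda>i. replicate (tau (C i) s) (y i 1)) [k+1..<m+1])
              @ concat (replicate (d_Y G Y (\<Union>i\<in>{1..k}. C i))
                  (concat (map (\<lambda>i. concat (map (\<lambda>j. replicate (cls_p G (C i)) (y i j))
                                                  [1..<card (C i) + 1]))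
                               [1..<k+1])))
              @ s1)"
proof -
  have "class_decomposition G Y C y m k"
    using finite_C_group_conj_closed_gens[OF CG] CG classes disj cover enum km amp
    unfolding class_decomposition_def class_decomposition_axioms_def finite_C_group_def by blast
  then interpret class_decomposition G Y C y m k .
  show ?thesis
    using normal_form[OF s_in s_gen tau_big] unfolding sY'_def class_word_def .
qed

end
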